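(* Let $E$, $(\cdot\,\cdot)$, $|\cdot|$, $v$, and $f$ be as in the continuous-solution construction below, and assume in addition that $v$ is a $C^\infty$-diffeomorphism. Define $r:\mathbb{R}\to\mathbb{R}$ by $v''=r\,v'$ and $s:E\times E\to E$ by $s(a,b)=r\big((ab)/|b|\big)|b|\,b$ for $b\ne0$, $s(a,0)=0$. Then $s(a,\lambda b)=\lambda^2 s(a,b)$ for all $\lambda\in\mathbb{R}$, $a,b\in E$, and every $g\in\mathrm{Geo}\,f$ is twice differentiable and satisfies $g''(t)+s(g(t),g'(t))=0$ on its domain.
   Context: $E$ is a real finite-dimensional inner product space with inner product $(a,b)\mapsto(ab)$ and norm $|\cdot|$; $v:\mathbb{R}\to\mathbb{R}$ is an odd homeomorphism. For $a\ne b$, $e=(a-b)/|a-b|$ and $v_{ab}(c)=c+(v((ce))-(ce))e$ (a bijection of $E$); $f:E\times E\times[0,1]\to E$ is $f(a,b,\gamma)=v_{ab}^{-1}((1-\gamma)v_{ab}(a)+\gamma v_{ab}(b))$ for $a\ne b$, $f(a,a,\gamma)=a$. $\mathrm{Geo}\,f$ is the set of maps $g:I\to E$ ($I\subset\mathbb{R}$ an open interval) such that for every $\tau\in I$ there exist $\alpha,\beta\in I$ with $\alpha<\tau<\beta$ and $g((1-\gamma)\alpha+\gamma\beta)=f(g(\alpha),g(\beta),\gamma)$ for all $\gamma\in[0,1]$. *)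

theory Defs
  imports "HOL-Analysis.Analysis"
begin

definition smooth_real :: "(real \<Rightarrow> real) \<Rightarrow> bool" where
  "smooth_real h \<longleftrightarrow> (\<forall>n x. (deriv ^^ n) h differentiable (at x))"

definition smooth_diffeo :: "(real \<Rightarrow> real) \<Rightarrow> bool" where
  "smooth_diffeo h \<longleftrightarrow> bij h \<and> smooth_real h \<and> smooth_real (inv h)"

definition odd_homeomorphism :: "(real \<Rightarrow> real) \<Rightarrow> bool" where
  "odd_homeomorphism h \<longleftrightarrow> (\<exists>k. homeomorphism UNIV UNIV h k) \<and> (\<forall>x. h (- x) = - h x)"

definition vab :: "(real \<Rightarrow> real) \<Rightarrow> 'a::euclidean_space \<Rightarrow> 'a \<Rightarrow> 'a \<Rightarrow> 'a" where
  "vab v a b c = (let e = (1 / norm (a - b)) *\<^sub>R (a - b)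
                  in c + (v (c \<bullet> e) - c \<bullet> e) *\<^sub>R e)"

definition fgeo :: "(real \<Rightarrow> real) \<Rightarrow> 'a::euclidean_space \<Rightarrow> 'a \<Rightarrow> real \<Rightarrow> 'a" where
  "fgeo v a b \<gamma> = (if a = b then a
     else inv (vab v a b) ((1 - \<gamma>) *\<^sub>R vab v a b a + \<gamma> *\<^sub>R vab v a b b))"

definition Geo :: "('a \<Rightarrow> 'a \<Rightarrow> real \<Rightarrow> 'a) \<Rightarrow> (real set \<times> (real \<Rightarrow> 'a)) set" where
  "Geo f = {(I, g). is_interval I \<and> open I \<and>
     (\<forall>\<tau>\<in>I. \<exists>\<alpha>\<in>I. \<exists>\<beta>\<in>I. \<alpha> < \<tau> \<and> \<tau> < \<beta> \<and>
        (\<forall>\<gamma>\<in>{0..1}. g ((1 - \<gamma>) * \<alpha> + \<gamma> * \<beta>) = f (g \<alpha>) (g \<beta>) \<gamma>))}"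

text \<open>r with v'' = r v' (v' never vanishes for a diffeomorphism).\<close>
definition rfun :: "(real \<Rightarrow> real) \<Rightarrow> real \<Rightarrow> real" where
  "rfun v x = deriv (deriv v) x / deriv v x"

definition sfun :: "(real \<Rightarrow> real) \<Rightarrow> 'a::euclidean_space \<Rightarrow> 'a \<Rightarrow> 'a" where
  "sfun v a b = (if b = 0 then 0 else (rfun v ((a \<bullet> b) / norm b) * norm b) *\<^sub>R b)"

end

theory Submission
  imports Defs
begin

text \<open>
  For \<open>a \<noteq> b\<close> and \<open>e = (a - b) / |a - b|\<close>, the map \<open>v\<^sub>a\<^sub>b\<close> keeps the component orthogonal to \<open>e\<close>
  and applies \<open>v\<close> to the \<open>e\<close>-coordinate. So \<open>f(a, b, \<gamma>)\<close> runs along the line through \<open>a\<close> and \<open>b\<close>,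
  and \<open>v\<close> of its \<open>e\<close>-coordinate is affine in \<open>\<gamma>\<close>. A geodesic is therefore locally \<open>t \<mapsto> q + x(t) e\<close>
  with \<open>v(x(t))\<close> affine in \<open>t\<close>. Differentiating \<open>v(x)' = const\<close> once more gives
  \<open>x'' + r(x) x'\<^sup>2 = 0\<close>, which is \<open>g'' + s(g, g') = 0\<close> because \<open>s(q + x e, y e) = r(x) y\<^sup>2 e\<close>.
  The homogeneity of \<open>s\<close> comes from \<open>r = v''/v'\<close> being odd, which it inherits from \<open>v\<close>.
\<close>

lemma deriv_reflect:
  fixes h :: "real \<Rightarrow> real"
  assumes differentiable: "\<And>x. h differentiable at x" and reflect: "\<And>y. h (- y) = c * h y"
  shows "deriv h (- x) = - c * deriv h x"
proof -
  have h': "(h has_real_derivative deriv h y) (at y)" for y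
    using differentiable DERIV_deriv_iff_real_differentiable by blast
  have "((\<lambda>y. h (- y)) has_real_derivative deriv h (- x) * - 1) (at x)"
    by (rule DERIV_chain2[OF h']) (auto intro!: derivative_eq_intros)
  moreover have "((\<lambda>y. h (- y)) has_real_derivative c * deriv h x) (at x)"
    unfolding reflect by (auto intro!: derivative_eq_intros h')
  ultimately show ?thesis
    using DERIV_unique by fastforce
qed

lemma sfun_scaleR:
  assumes rfun_odd: "\<And>x. rfun v (- x) = - rfun v x"
  shows "sfun v a (c *\<^sub>R b) = c\<^sup>2 *\<^sub>R sfun v a b"
proof (cases "c = 0 \<or> b = 0")
  case True
  then show ?thesis by (auto simp: sfun_def)
next
  case False
  have "rfun v (a \<bullet> (c *\<^sub>R b) / norm (c *\<^sub>R b)) * norm (c *\<^sub>R b)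
        = c * (rfun v (a \<bullet> b / norm b) * norm b)"
  proof (cases "c > 0")
    case True
    then show ?thesis by simp
  next
    case False
    then have "\<bar>c\<bar> = - c" by simp
    then show ?thesis
      using rfun_odd[of "a \<bullet> b / norm b"] by (simp add: divide_simps)
  qed
  then show ?thesis
    using False by (simp add: sfun_def power2_eq_square)
qed

lemma sfun_along_unit_vector:
  assumes rfun_odd: "\<And>x. rfun v (- x) = - rfun v x"
    and orthogonal: "q \<bullet> e = 0" and unit: "norm e = 1"
  shows "sfun v (q + x *\<^sub>R e) (y *\<^sub>R e) = (y\<^sup>2 * rfun v x) *\<^sub>R e"
proof -
  have "(q + x *\<^sub>R e) \<bullet> e = x"
    using orthogonal unit by (simp add: inner_add_left dot_square_norm)
  then have "sfun v (q + x *\<^sub>R e) e = rfun v x *\<^sub>R e"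
    using unit by (auto simp: sfun_def)
  then show ?thesis
    using sfun_scaleR[OF rfun_odd, of "q + x *\<^sub>R e" y e] by simp
qed

lemma Geo_locally_segment:
  assumes "(I, g) \<in> Geo f" and "\<tau> \<in> I"
  obtains \<alpha> \<beta> where "\<alpha> < \<tau>" "\<tau> < \<beta>"
    and "\<And>t. t \<in> {\<alpha><..<\<beta>} \<Longrightarrow> g t = f (g \<alpha>) (g \<beta>) ((t - \<alpha>) / (\<beta> - \<alpha>))"
proof -
  obtain \<alpha> \<beta> where "\<alpha> < \<tau>" "\<tau> < \<beta>"
    and segment: "\<And>\<gamma>. \<gamma> \<in> {0..1} \<Longrightarrow> g ((1 - \<gamma>) * \<alpha> + \<gamma> * \<beta>) = f (g \<alpha>) (g \<beta>) \<gamma>"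
    using assms unfolding Geo_def by blast
  moreover have "g t = f (g \<alpha>) (g \<beta>) ((t - \<alpha>) / (\<beta> - \<alpha>))" if "t \<in> {\<alpha><..<\<beta>}" for t
  proof -
    define \<gamma> where "\<gamma> = (t - \<alpha>) / (\<beta> - \<alpha>)"
    have "\<gamma> * (\<beta> - \<alpha>) = t - \<alpha>"
      using that by (simp add: \<gamma>_def)
    then have "(1 - \<gamma>) * \<alpha> + \<gamma> * \<beta> = t"
      by (simp add: algebra_simps)
    moreover have "\<gamma> \<in> {0..1}"
      using that by (auto simp: \<gamma>_def field_simps)
    ultimately show ?thesis
      using segment unfolding \<gamma>_def by metis
  qed
  ultimately show ?thesis
    using that by blast
qed

lemma second_order_solution_if_locally:
  fixes g :: "real \<Rightarrow> 'a::real_normed_vector" and F :: "'a \<Rightarrow> 'a \<Rightarrow> 'a"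
  assumes local: "\<And>\<tau>. \<tau> \<in> I \<Longrightarrow> \<exists>S G1 G2. open S \<and> \<tau> \<in> S \<and>
      (\<forall>t\<in>S. (g has_vector_derivative G1 t) (at t) \<and> (G1 has_vector_derivative G2 t) (at t)
        \<and> G2 t + F (g t) (G1 t) = 0)"
  shows "\<exists>g' g''. \<forall>t\<in>I. (g has_vector_derivative g' t) (at t)
      \<and> (g' has_vector_derivative g'' t) (at t) \<and> g'' t + F (g t) (g' t) = 0"
proof -
  define g' where "g' = (\<lambda>t. vector_derivative g (at t))"
  define g'' where "g'' = (\<lambda>t. vector_derivative g' (at t))"
  have "(g has_vector_derivative g' \<tau>) (at \<tau>) \<and> (g' has_vector_derivative g'' \<tau>) (at \<tau>)
      \<and> g'' \<tau> + F (g \<tau>) (g' \<tau>) = 0" if \<tau>_in: "\<tau> \<in> I" for \<tau>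
  proof -
    obtain S G1 G2 where "open S" "\<tau> \<in> S"
      and solution: "\<And>t. t \<in> S \<Longrightarrow> (g has_vector_derivative G1 t) (at t)
          \<and> (G1 has_vector_derivative G2 t) (at t) \<and> G2 t + F (g t) (G1 t) = 0"
      using local[OF \<tau>_in] by blast
    have g'_eq: "g' t = G1 t" if "t \<in> S" for t
      unfolding g'_def using solution[OF that] vector_derivative_at by blast
    have "(g' has_vector_derivative G2 \<tau>) (at \<tau>)"
      by (rule has_vector_derivative_transform_within_open[of G1 _ _ S])
        (use solution g'_eq \<open>open S\<close> \<open>\<tau> \<in> S\<close> in auto)
    moreover from this have "g'' \<tau> = G2 \<tau>"
      unfolding g''_def by (rule vector_derivative_at)
    ultimately show ?thesis
      using solution[OF \<open>\<tau> \<in> S\<close>] g'_eq[OF \<open>\<tau> \<in> S\<close>] by simp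
  qed
  then show ?thesis
    by blast
qed

locale odd_twice_differentiable_diffeo =
  fixes v :: "real \<Rightarrow> real"
  assumes bij: "bij v"
    and differentiable: "\<And>x. v differentiable at x"
    and deriv_differentiable: "\<And>x. deriv v differentiable at x"
    and inv_differentiable: "\<And>y. inv v differentiable at y"
    and odd: "\<And>x. v (- x) = - v x"
begin

lemma v_inv_v [simp]: "v (inv v y) = y"
  using bij by (simp add: bij_is_surj surj_f_inv_f)

lemma inv_v_v [simp]: "inv v (v x) = x"
  using bij by (simp add: bij_is_inj)

lemma has_real_derivative_v: "(v has_real_derivative deriv v x) (at x)"
  using differentiable DERIV_deriv_iff_real_differentiable by blast

lemma has_real_derivative_deriv_v: "(deriv v has_real_derivative deriv (deriv v) x) (at x)"
  using deriv_differentiable DERIV_deriv_iff_real_differentiable by blast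

lemma deriv_v_inv_v_mult: "deriv v (inv v y) * deriv (inv v) y = 1"
proof -
  have "((\<lambda>y. v (inv v y)) has_real_derivative deriv v (inv v y) * deriv (inv v) y) (at y)"
    using DERIV_chain2[OF has_real_derivative_v] inv_differentiable
      DERIV_deriv_iff_real_differentiable by blast
  moreover have "((\<lambda>y. v (inv v y)) has_real_derivative 1) (at y)"
    by simp
  ultimately show ?thesis
    using DERIV_unique by blast
qed

lemma deriv_v_nonzero: "deriv v x \<noteq> 0"
  using deriv_v_inv_v_mult[of "v x"] by force

lemma has_real_derivative_inv_v: "(inv v has_real_derivative 1 / deriv v (inv v y)) (at y)"
proof -
  have "deriv (inv v) y = 1 / deriv v (inv v y)"
    using deriv_v_inv_v_mult[of y] deriv_v_nonzero[of "inv v y"] by (simp add: field_simps)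
  then show ?thesis
    using inv_differentiable DERIV_deriv_iff_real_differentiable by metis
qed

lemma rfun_odd: "rfun v (- x) = - rfun v x"
proof -
  have deriv_even: "deriv v (- y) = deriv v y" for y
    using deriv_reflect[of v "- 1"] differentiable odd by simp
  have "deriv (deriv v) (- x) = - deriv (deriv v) x"
    using deriv_reflect[of "deriv v" 1] deriv_differentiable deriv_even by simp
  then show ?thesis
    unfolding rfun_def deriv_even by simp
qed

lemma inv_vab:
  assumes "a \<noteq> b"
  defines "e \<equiv> (1 / norm (a - b)) *\<^sub>R (a - b)"
  shows "inv (vab v a b) y = y + (inv v (y \<bullet> e) - y \<bullet> e) *\<^sub>R e"
proof -
  have vab: "vab v a b c = c + (v (c \<bullet> e) - c \<bullet> e) *\<^sub>R e" for c
    by (simp add: vab_def e_def)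
  have "e \<bullet> e = 1"
    using assms by (simp add: dot_square_norm power2_eq_square)
  then have vab_e: "vab v a b c \<bullet> e = v (c \<bullet> e)" for c
    by (simp add: vab inner_add_left)
  have "inj (vab v a b)"
  proof (rule injI)
    fix c d assume eq: "vab v a b c = vab v a b d"
    then have "c \<bullet> e = d \<bullet> e"
      using vab_e by (metis inv_v_v)
    then show "c = d"
      using eq by (simp add: vab)
  qed
  moreover have "vab v a b (y + (inv v (y \<bullet> e) - y \<bullet> e) *\<^sub>R e) = y"
    using \<open>e \<bullet> e = 1\<close> by (simp add: vab inner_add_left algebra_simps)
  ultimately show ?thesis
    by (rule inv_f_eq)
qed

lemma fgeo_on_line:
  assumes "a \<noteq> b"
  defines "e \<equiv> (1 / norm (a - b)) *\<^sub>R (a - b)"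
  shows "fgeo v a b \<gamma> = a - (a \<bullet> e) *\<^sub>R e + inv v ((1 - \<gamma>) * v (a \<bullet> e) + \<gamma> * v (b \<bullet> e)) *\<^sub>R e"
proof -
  define q where "q = a - (a \<bullet> e) *\<^sub>R e"
  define L where "L = (1 - \<gamma>) * v (a \<bullet> e) + \<gamma> * v (b \<bullet> e)"
  have vab: "vab v a b c = (c - (c \<bullet> e) *\<^sub>R e) + v (c \<bullet> e) *\<^sub>R e" for c
    by (simp add: vab_def e_def algebra_simps)
  have "e \<bullet> e = 1"
    using \<open>a \<noteq> b\<close> by (simp add: e_def dot_square_norm power2_eq_square)
  define n where "n = norm (a - b)"
  have b_eq: "b = a - n *\<^sub>R e"
    using \<open>a \<noteq> b\<close> by (simp add: e_def n_def)
  then have "b \<bullet> e = a \<bullet> e - n"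
    using \<open>e \<bullet> e = 1\<close> by (simp add: inner_diff_left)
  then have "b - (b \<bullet> e) *\<^sub>R e = q"
    by (subst b_eq) (simp add: q_def algebra_simps, metis scaleR_add_left)
  then have "vab v a b b = q + v (b \<bullet> e) *\<^sub>R e"
    by (simp add: vab)
  moreover have "vab v a b a = q + v (a \<bullet> e) *\<^sub>R e"
    by (simp add: vab q_def)
  ultimately have "fgeo v a b \<gamma> = inv (vab v a b) (q + L *\<^sub>R e)"
    using \<open>a \<noteq> b\<close> by (simp add: fgeo_def L_def algebra_simps)
  also have "\<dots> = q + inv v L *\<^sub>R e"
  proof -
    have "(q + L *\<^sub>R e) \<bullet> e = L"
      using \<open>e \<bullet> e = 1\<close> by (simp add: q_def inner_add_left inner_diff_left)
    then show ?thesis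
      by (simp add: inv_vab[OF \<open>a \<noteq> b\<close>, folded e_def] algebra_simps)
  qed
  finally show ?thesis
    by (simp add: q_def L_def)
qed

lemma has_real_derivative_inv_v_affine:
  "((\<lambda>t. inv v (C + t * K)) has_real_derivative K / deriv v (inv v (C + t * K))) (at t)"
proof -
  have "((\<lambda>t. inv v (C + t * K)) has_real_derivative 1 / deriv v (inv v (C + t * K)) * K) (at t)"
    by (rule DERIV_chain2[OF has_real_derivative_inv_v]) (auto intro!: derivative_eq_intros)
  then show ?thesis
    by simp
qed

lemma has_real_derivative_inv_v_affine_velocity:
  fixes C K :: real
  defines "x \<equiv> \<lambda>t. inv v (C + t * K)"
  shows "((\<lambda>t. K / deriv v (x t)) has_real_derivative
      - rfun v (x t) * (K / deriv v (x t))\<^sup>2) (at t)"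
proof -
  have "((\<lambda>t. deriv v (x t)) has_real_derivative
      deriv (deriv v) (x t) * (K / deriv v (x t))) (at t)"
    unfolding x_def by (rule DERIV_chain2[OF has_real_derivative_deriv_v has_real_derivative_inv_v_affine])
  from DERIV_divide[OF DERIV_const this] show ?thesis
    using deriv_v_nonzero[of "x t"] by (simp add: rfun_def field_simps power2_eq_square)
qed

lemma Geo_fgeo_locally_solves_ode:
  fixes g :: "real \<Rightarrow> 'a::euclidean_space"
  assumes "(I, g) \<in> Geo (fgeo v)" and "\<tau> \<in> I"
  shows "\<exists>S G1 G2. open S \<and> \<tau> \<in> S \<and>
      (\<forall>t\<in>S. (g has_vector_derivative G1 t) (at t) \<and> (G1 has_vector_derivative G2 t) (at t)
        \<and> G2 t + sfun v (g t) (G1 t) = 0)"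
proof -
  obtain \<alpha> \<beta> where "\<alpha> < \<tau>" "\<tau> < \<beta>"
    and segment: "\<And>t. t \<in> {\<alpha><..<\<beta>} \<Longrightarrow> g t = fgeo v (g \<alpha>) (g \<beta>) ((t - \<alpha>) / (\<beta> - \<alpha>))"
    using Geo_locally_segment[OF assms] by blast
  define S where "S = {\<alpha><..<\<beta>}"
  have "open S" "\<tau> \<in> S"
    using \<open>\<alpha> < \<tau>\<close> \<open>\<tau> < \<beta>\<close> by (auto simp: S_def)
  show ?thesis
  proof (cases "g \<alpha> = g \<beta>")
    case True
    then have g_const: "g t = g \<alpha>" if "t \<in> S" for t
      using segment that by (simp add: S_def fgeo_def)
    have "(g has_vector_derivative 0) (at t)" if "t \<in> S" for t
      by (rule has_vector_derivative_transform_within_open[OF has_vector_derivative_const \<open>open S\<close> that])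
        (simp add: g_const)
    then show ?thesis
      using \<open>open S\<close> \<open>\<tau> \<in> S\<close> by (intro exI[of _ S] exI[of _ "\<lambda>_. 0"]) (auto simp: sfun_def)
  next
    case False
    define e where "e = (1 / norm (g \<alpha> - g \<beta>)) *\<^sub>R (g \<alpha> - g \<beta>)"
    define q where "q = g \<alpha> - (g \<alpha> \<bullet> e) *\<^sub>R e"
    define K where "K = (v (g \<beta> \<bullet> e) - v (g \<alpha> \<bullet> e)) / (\<beta> - \<alpha>)"
    define C where "C = v (g \<alpha> \<bullet> e) - \<alpha> * K"
    define x where "x = (\<lambda>t. inv v (C + t * K))"
    define G1 where "G1 = (\<lambda>t. (K / deriv v (x t)) *\<^sub>R e)"
    define G2 where "G2 = (\<lambda>t. (- rfun v (x t) * (K / deriv v (x t))\<^sup>2) *\<^sub>R e)"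
    have "norm e = 1"
      using False by (simp add: e_def)
    then have "q \<bullet> e = 0"
      by (simp add: q_def inner_diff_left dot_square_norm)
    have curve: "g t = q + x t *\<^sub>R e" if "t \<in> S" for t
    proof -
      have "(1 - (t - \<alpha>) / (\<beta> - \<alpha>)) * v (g \<alpha> \<bullet> e) + (t - \<alpha>) / (\<beta> - \<alpha>) * v (g \<beta> \<bullet> e)
          = C + t * K"
        using \<open>\<alpha> < \<tau>\<close> \<open>\<tau> < \<beta>\<close> by (simp add: C_def K_def field_simps)
      then show ?thesis
        using segment[OF that[unfolded S_def]] fgeo_on_line[OF False]
        by (simp add: e_def[symmetric] q_def x_def)
    qed
    have "((\<lambda>t. q + x t *\<^sub>R e) has_vector_derivative G1 t) (at t)" for t
      unfolding G1_def x_def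
      by (auto intro!: derivative_eq_intros has_real_derivative_inv_v_affine)
    moreover have "(G1 has_vector_derivative G2 t) (at t)" for t
      using has_vector_derivative_scaleR[OF has_real_derivative_inv_v_affine_velocity
          has_vector_derivative_const[of e]]
      by (simp add: G1_def G2_def x_def)
    moreover have "G2 t + sfun v (q + x t *\<^sub>R e) (G1 t) = 0" for t
      using sfun_along_unit_vector[OF rfun_odd \<open>q \<bullet> e = 0\<close> \<open>norm e = 1\<close>]
      by (simp add: G1_def G2_def)
    ultimately show ?thesis
      using \<open>open S\<close> \<open>\<tau> \<in> S\<close> curve
        has_vector_derivative_transform_within_open[of "\<lambda>t. q + x t *\<^sub>R e" _ _ S g]
      by (intro exI[of _ S] exI[of _ G1] exI[of _ G2]) auto
  qed
qed

end

theorem mainTheorem9: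
  fixes v :: "real \<Rightarrow> real"
  assumes "odd_homeomorphism v"
    and "smooth_diffeo v"
  shows "(\<forall>(a::'a::euclidean_space) b (c::real).
            sfun v a (c *\<^sub>R b) = c\<^sup>2 *\<^sub>R sfun v a b)
       \<and> (\<forall>(I, g) \<in> Geo (fgeo v :: 'a \<Rightarrow> 'a \<Rightarrow> real \<Rightarrow> 'a).
            \<exists>g' g''. \<forall>t\<in>I. (g has_vector_derivative g' t) (at t)
                       \<and> (g' has_vector_derivative g'' t) (at t)
                       \<and> g'' t + sfun v (g t) (g' t) = 0)"
proof -
  have smooth: "(deriv ^^ n) h differentiable at x" if "smooth_real h" for h n x
    using that by (simp add: smooth_real_def)
  interpret odd_twice_differentiable_diffeo v
  proof
    show "bij v" "v differentiable at x" "inv v differentiable at y" for x y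
      using assms(2) smooth[of _ 0] by (auto simp: smooth_diffeo_def)
    show "deriv v differentiable at x" for x
      using assms(2) smooth[of v 1] by (simp add: smooth_diffeo_def)
    show "v (- x) = - v x" for x
      using assms(1) by (simp add: odd_homeomorphism_def)
  qed
  have "\<exists>g' g''. \<forall>t\<in>I. (g has_vector_derivative g' t) (at t)
      \<and> (g' has_vector_derivative g'' t) (at t) \<and> g'' t + sfun v (g t) (g' t) = 0"
    if "(I, g) \<in> Geo (fgeo v)" for I and g :: "real \<Rightarrow> 'a"
    using Geo_fgeo_locally_solves_ode[OF that] by (rule second_order_solution_if_locally)
  then show ?thesis
    using sfun_scaleR[OF rfun_odd] by auto
qed

end
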